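(* Let $N\ge4$ and let $H=(f_1,\dots,f_{N-1},g)\colon\mathbb{H}^3\to\mathbb{H}^{2N-1}$ be a smooth CR map with $H(0)=0$ which is tangentially $(2,N-3)$-degenerate at the origin and satisfies the normalization conditions $H^{(1,0)}=e_1$, $H^{(0,1)}=e_N$, $H^{(2,0)}=2e_2$, $f_2^{(1,1)}=0$, $\operatorname{Re}(g^{(0,2)})=0$, $\operatorname{Re}(f_2^{(2,1)})=0$, $f_1^{(0,2)}\ge0$. Then for every $3\le k\le N-1$, $$\left(2z^2+w^2f_2^{(0,2)}\right)f_k(z,w)=w\left(2zf_k^{(1,1)}+wf_k^{(0,2)}\right)f_2(z,w).$$
   Context: $\mathbb{H}^{2n-1}=\{(z,w)\in\mathbb{C}^{n-1}\times\mathbb{C}:\operatorname{Im}w=\|z\|^2\}$; such CR maps are restrictions of rational holomorphic maps. $h^{(k,\ell)}=\partial^{k+\ell}h(0)/\partial z^k\partial w^\ell$; $e_j$ is the $j$-th standard unit vector in $\mathbb{C}^N$. Tangential degeneracy: with $f=(f_1,\dots,f_{N-1})$, $\bar f(\chi,\tau)=\overline{f(\bar\chi,\bar\tau)}$, $L=\partial_\chi-2iz\partial_\tau$ on $\mathcal M=\{w-\tau=2iz\chi\}$, $\tilde E_\ell(p,\bar q)=\operatorname{span}\{(L^k\bar f)(p,\bar q):k\le\ell\}\subset\mathbb{C}^{N-1}$, $\tilde E=\bigcup_\ell\tilde E_\ell$, $d(p,\bar q)=N-1-\dim\tilde E(p,\bar q)$, $S_q=\{w=\tau+2iz\chi\}$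 for $\bar q=(\chi,\tau)$, $\operatorname{tdeg}_H(q)=\max_{p\in S_q}d(p,\bar q)$; $H$ is tangentially $(k,\operatorname{tdeg}_H(q))$-degenerate at $q$ if $k$ is the smallest integer with $\tilde E_k(p,\bar q)=\tilde E(p,\bar q)$ for generic $p\in S_q$. *)

theory Defs
  imports "HOL-Analysis.Analysis" "HOL-Library.Function_Algebras"
begin

text \<open>Holomorphic on an open set U of C^2: continuous and holomorphic in each
  variable separately (equivalent to joint holomorphy by Osgood's lemma).\<close>
definition holo2 :: "(complex \<times> complex) set \<Rightarrow> (complex \<times> complex \<Rightarrow> complex) \<Rightarrow> bool" where
  "holo2 U F \<longleftrightarrow> open U \<and> continuous_on U F \<and>
     (\<forall>a b. (a, b) \<in> U \<longrightarrow>
        (\<lambda>x. F (x, b)) field_differentiable (at a) \<and>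
        (\<lambda>y. F (a, y)) field_differentiable (at b))"

definition dz :: "(complex \<times> complex \<Rightarrow> complex) \<Rightarrow> complex \<times> complex \<Rightarrow> complex" where
  "dz F = (\<lambda>(a, b). deriv (\<lambda>x. F (x, b)) a)"

definition dw :: "(complex \<times> complex \<Rightarrow> complex) \<Rightarrow> complex \<times> complex \<Rightarrow> complex" where
  "dw F = (\<lambda>(a, b). deriv (\<lambda>y. F (a, y)) b)"

text \<open>h^{(k,l)} = d^{k+l} h(0) / dz^k dw^l\<close>
definition pd :: "nat \<Rightarrow> nat \<Rightarrow> (complex \<times> complex \<Rightarrow> complex) \<Rightarrow> complex" where
  "pd k l F = (dz ^^ k) ((dw ^^ l) F) (0, 0)"

definition Heis3 :: "(complex \<times> complex) set" where
  "Heis3 = {(z, w). Im w = (cmod z)\<^sup>2}"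

definition inHeis :: "nat \<Rightarrow> (nat \<Rightarrow> complex) \<Rightarrow> complex \<Rightarrow> bool" where
  "inHeis N zz w \<longleftrightarrow> Im w = (\<Sum>j=1..N-1. (cmod (zz j))\<^sup>2)"

definition fbar :: "(complex \<times> complex \<Rightarrow> complex) \<Rightarrow> complex \<times> complex \<Rightarrow> complex" where
  "fbar F = (\<lambda>(c, t). cnj (F (cnj c, cnj t)))"

text \<open>The vector field L = d/dchi - 2 i z d/dtau, z being the first coordinate of p\<close>
definition Lop :: "complex \<Rightarrow> (complex \<times> complex \<Rightarrow> complex) \<Rightarrow> complex \<times> complex \<Rightarrow> complex" where
  "Lop z F = (\<lambda>x. dz F x - 2 * \<i> * z * dw F x)"

text \<open>Vectors of C^{N-1} are functions nat => complex supported in {1..N-1};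
  complex scalar multiplication.\<close>
definition cscale :: "complex \<Rightarrow> (nat \<Rightarrow> complex) \<Rightarrow> nat \<Rightarrow> complex" where
  "cscale c v = (\<lambda>i. c * v i)"

text \<open>(L^k bar f)(p, bar q) in C^{N-1}, for f = (f_1,...,f_{N-1}), p = (z,w), bar q = qb\<close>
definition Lvec :: "nat \<Rightarrow> (nat \<Rightarrow> complex \<times> complex \<Rightarrow> complex) \<Rightarrow> nat
                    \<Rightarrow> complex \<times> complex \<Rightarrow> complex \<times> complex \<Rightarrow> nat \<Rightarrow> complex" where
  "Lvec N f k p qb = (\<lambda>j. if 1 \<le> j \<and> j \<le> N - 1 then ((Lop (fst p) ^^ k) (fbar (f j))) qb else 0)"

definition Etl :: "nat \<Rightarrow> (nat \<Rightarrow> complex \<times> complex \<Rightarrow> complex) \<Rightarrow> nat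
                    \<Rightarrow> complex \<times> complex \<Rightarrow> complex \<times> complex \<Rightarrow> (nat \<Rightarrow> complex) set" where
  "Etl N f l p qb = module.span cscale {Lvec N f k p qb | k. k \<le> l}"

definition Et :: "nat \<Rightarrow> (nat \<Rightarrow> complex \<times> complex \<Rightarrow> complex)
                    \<Rightarrow> complex \<times> complex \<Rightarrow> complex \<times> complex \<Rightarrow> (nat \<Rightarrow> complex) set" where
  "Et N f p qb = module.span cscale {Lvec N f k p qb | k. True}"

definition dgen :: "nat \<Rightarrow> (nat \<Rightarrow> complex \<times> complex \<Rightarrow> complex)
                    \<Rightarrow> complex \<times> complex \<Rightarrow> complex \<times> complex \<Rightarrow> nat" where
  "dgen N f p qb = N - 1 - vector_space.dim cscale (Et N f p qb)"

definition qbar :: "complex \<times> complex \<Rightarrow> complex \<times> complex" where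
  "qbar q = (cnj (fst q), cnj (snd q))"

definition Sq :: "complex \<times> complex \<Rightarrow> (complex \<times> complex) set" where
  "Sq q = {(z, w). w = snd (qbar q) + 2 * \<i> * z * fst (qbar q)}"

definition tdeg :: "nat \<Rightarrow> (nat \<Rightarrow> complex \<times> complex \<Rightarrow> complex) \<Rightarrow> complex \<times> complex \<Rightarrow> nat" where
  "tdeg N f q = Max ((\<lambda>p. dgen N f p (qbar q)) ` Sq q)"

text \<open>A property holds for generic p in S_q if it holds on a (relatively) open dense
  subset of S_q; S_q is parametrized by its z-coordinate.\<close>
definition generic_on_Sq :: "complex \<times> complex \<Rightarrow> (complex \<times> complex \<Rightarrow> bool) \<Rightarrow> bool" where
  "generic_on_Sq q P \<longleftrightarrow> (\<exists>A. open A \<and> closure A = UNIV \<and>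
      (\<forall>z\<in>A. P (z, snd (qbar q) + 2 * \<i> * z * fst (qbar q))))"

definition tang_degenerate :: "nat \<Rightarrow> (nat \<Rightarrow> complex \<times> complex \<Rightarrow> complex)
                                \<Rightarrow> complex \<times> complex \<Rightarrow> nat \<Rightarrow> nat \<Rightarrow> bool" where
  "tang_degenerate N f q k d \<longleftrightarrow> d = tdeg N f q \<and>
     generic_on_Sq q (\<lambda>p. Etl N f k p (qbar q) = Et N f p (qbar q)) \<and>
     (\<forall>k'<k. \<not> generic_on_Sq q (\<lambda>p. Etl N f k' p (qbar q) = Et N f p (qbar q)))"

end

theory Submission
  imports Defs "HOL-Complex_Analysis.Complex_Analysis"
begin

(* Tangential degeneracy at the origin gives, for z in a dense set, that every vector
   (L^n bar f)(p, 0) with p = (z, 0) lies in the span of those with n <= 2. At bar q = 0 the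
   field L acting on bar f is conjugate to differentiation of f along the complex line w = c t,
   c = 2 i cnj z, and the normalizations make the components j >= 2 of the vectors of order 0
   and 1 vanish. So for j = 2, k all Taylor coefficients of f_j along that line are one common
   multiple of the second-order ones, whence (D_c^2 f_2)(0) f_k = (D_c^2 f_k)(0) f_2 on the line.
   Multiplied by t^2 this is the claimed identity at (z, w) = (t, c t), and the density of the
   slopes c together with continuity gives it near the origin.

   Because holo2 only asks for continuity and separate holomorphy, the calculus in two variables
   rests on a Cauchy estimate in z that is uniform in w: it makes the z-difference quotients
   converge uniformly in w, so partial derivatives are again separately holomorphic and
   continuous, mixed partials commute, and F is complex differentiable along complex lines. *)

section \<open>Separately holomorphic functions of two variables\<close>

lemma open_slice_fst: "open U \<Longrightarrow> open {x. (x, b) \<in> U}"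
  using open_vimage[of U "\<lambda>x. (x, b)"] by (simp add: vimage_def continuous_on_Pair)

lemma open_slice_snd: "open U \<Longrightarrow> open {y. (a, y) \<in> U}"
  using open_vimage[of U "\<lambda>y. (a, y)"] by (simp add: vimage_def continuous_on_Pair)

lemma holo2_open: "holo2 U F \<Longrightarrow> open U"
  by (simp add: holo2_def)

lemma holo2_holomorphic_fst: "holo2 U F \<Longrightarrow> (\<lambda>x. F (x, b)) holomorphic_on {x. (x, b) \<in> U}"
  using open_slice_fst[of U b] by (auto simp: holo2_def holomorphic_on_open field_differentiable_def)

lemma holo2_has_dz:
  "holo2 U F \<Longrightarrow> (a, b) \<in> U \<Longrightarrow> ((\<lambda>x. F (x, b)) has_field_derivative dz F (a, b)) (at a)"
  by (auto simp: holo2_def dz_def DERIV_deriv_iff_field_differentiable)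

lemma holo2_has_dw:
  "holo2 U F \<Longrightarrow> (a, b) \<in> U \<Longrightarrow> ((\<lambda>y. F (a, y)) has_field_derivative dw F (a, b)) (at b)"
  by (auto simp: holo2_def dw_def DERIV_deriv_iff_field_differentiable)

lemma holo2_dz_has_derivative_fst:
  assumes "holo2 U F" "(a, b) \<in> U"
  shows "((\<lambda>x. dz F (x, b)) has_field_derivative (deriv ^^ 2) (\<lambda>x. F (x, b)) a) (at a)"
proof -
  have "((deriv ^^ 1) (\<lambda>x. F (x, b)) has_field_derivative (deriv ^^ Suc 1) (\<lambda>x. F (x, b)) a) (at a)"
    using assms holo2_holomorphic_fst open_slice_fst[OF holo2_open]
    by (intro has_field_derivative_higher_deriv) auto
  then show ?thesis by (simp add: dz_def numeral_2_eq_2)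
qed

lemma dz_dw_cong_open:
  assumes "open V" "p \<in> V" "\<And>q. q \<in> V \<Longrightarrow> G q = H q"
  shows "dz G p = dz H p" and "dw G p = dw H p"
proof -
  obtain a b where p: "p = (a, b)" by fastforce
  have "\<forall>\<^sub>F x in nhds a. G (x, b) = H (x, b)"
    using eventually_nhds_in_open[OF open_slice_fst[OF assms(1)], of a b] assms p
    by (auto elim!: eventually_mono)
  then show "dz G p = dz H p" using p by (simp add: dz_def deriv_cong_ev)
  have "\<forall>\<^sub>F y in nhds b. G (a, y) = H (a, y)"
    using eventually_nhds_in_open[OF open_slice_snd[OF assms(1)], of b a] assms p
    by (auto elim!: eventually_mono)
  then show "dw G p = dw H p" using p by (simp add: dw_def deriv_cong_ev)
qed

lemma holo2_add_cmult:
  "holo2 U F \<Longrightarrow> holo2 U G \<Longrightarrow> holo2 U (\<lambda>p. F p + c * G p)"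
  unfolding holo2_def
  by (auto intro!: continuous_intros field_differentiable_add field_differentiable_mult
      field_differentiable_const)

lemma cball_Times_subset_open:
  fixes a :: "'a::metric_space" and b :: "'b::metric_space"
  assumes "open U" "(a, b) \<in> U"
  obtains r where "r > 0" "cball a r \<times> cball b r \<subseteq> U"
proof -
  obtain e where "e > 0" "cball (a, b) e \<subseteq> U"
    using assms open_contains_cball by blast
  moreover have "cball a (e / 2) \<times> cball b (e / 2) \<subseteq> cball (a, b) e"
  proof clarify
    fix x y assume "x \<in> cball a (e / 2)" "y \<in> cball b (e / 2)"
    then have "dist a x + dist b y \<le> e" by simp
    then show "(x, y) \<in> cball (a, b) e"
      using sqrt_sum_squares_le_sum[of "dist a x" "dist b y"] by (simp add: dist_Pair_Pair)
  qed
  ultimately show ?thesis using that[of "e / 2"] by (meson half_gt_zero subset_trans)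
qed

lemma bounded_second_derivative_estimates:
  fixes f f' f'' :: "complex \<Rightarrow> complex"
  assumes f': "\<And>t. t \<in> cball a r \<Longrightarrow> (f has_field_derivative f' t) (at t)"
    and f'': "\<And>t. t \<in> cball a r \<Longrightarrow> (f' has_field_derivative f'' t) (at t)"
    and bound: "\<And>t. t \<in> cball a r \<Longrightarrow> norm (f'' t) \<le> C"
    and x: "x \<in> cball a r"
  shows "norm (f' x - f' a) \<le> C * norm (x - a)"
    and "norm (f x - f a - (x - a) * f' a) \<le> C * (norm (x - a))\<^sup>2"
proof -
  have a: "a \<in> cball a r"
    using x zero_le_dist[of a x] unfolding centre_in_cball mem_cball by linarith
  have lipschitz: "norm (f' t - f' a) \<le> C * norm (t - a)" if t: "t \<in> cball a r" for t
    by (rule field_differentiable_bound[OF convex_cball _ bound t a])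
       (rule has_field_derivative_at_within[OF f''])
  then show "norm (f' x - f' a) \<le> C * norm (x - a)" using x .
  have C: "C \<ge> 0" using bound[OF a] norm_ge_zero order_trans by blast
  have "norm ((f x - x * f' a) - (f a - a * f' a)) \<le> (C * norm (x - a)) * norm (x - a)"
  proof (rule field_differentiable_bound[OF convex_cball])
    fix t assume t: "t \<in> cball a (norm (x - a))"
    then have "norm (t - a) \<le> norm (x - a)" by (simp add: dist_norm norm_minus_commute)
    moreover have t': "t \<in> cball a r" using t x by (simp add: dist_norm norm_minus_commute)
    ultimately show "norm (f' t - f' a) \<le> C * norm (x - a)"
      using lipschitz[OF t'] C by (meson mult_left_mono order_trans)
    have "((\<lambda>x. f x - x * f' a) has_field_derivative f' t - 1 * f' a) (at t)"
      by (intro DERIV_diff DERIV_cmult_right f'[OF t'] DERIV_ident)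
    then show "((\<lambda>x. f x - x * f' a) has_field_derivative f' t - f' a) (at t within cball a (norm (x - a)))"
      by (simp add: has_field_derivative_at_within)
  qed (simp_all add: dist_norm norm_minus_commute)
  then show "norm (f x - f a - (x - a) * f' a) \<le> C * (norm (x - a))\<^sup>2"
    by (simp add: algebra_simps power2_eq_square)
qed

lemma holo2_second_dz_bounded:
  assumes F: "holo2 U F" and r: "r > 0" and box: "cball a (2 * r) \<times> cball b (2 * r) \<subseteq> U"
  obtains C where "\<And>x y. x \<in> cball a r \<Longrightarrow> y \<in> cball b (2 * r) \<Longrightarrow>
    norm ((deriv ^^ 2) (\<lambda>x. F (x, y)) x) \<le> C"
proof -
  have "compact (F ` (cball a (2 * r) \<times> cball b (2 * r)))"
    using F box by (intro compact_continuous_image compact_Times)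
      (auto simp: holo2_def intro: continuous_on_subset)
  then obtain M where M: "\<And>p. p \<in> cball a (2 * r) \<times> cball b (2 * r) \<Longrightarrow> norm (F p) \<le> M"
    by (meson compact_imp_bounded bounded_iff image_eqI)
  have "norm ((deriv ^^ 2) (\<lambda>x. F (x, y)) x) \<le> fact 2 * M / r ^ 2"
    if x: "x \<in> cball a r" and y: "y \<in> cball b (2 * r)" for x y
  proof (rule Cauchy_inequality)
    have "cball x r \<subseteq> cball a (2 * r)"
    proof
      fix t assume "t \<in> cball x r"
      then show "t \<in> cball a (2 * r)" using x dist_triangle[of a t x] by auto
    qed
    then have sub: "cball x r \<subseteq> {x. (x, y) \<in> U}" using box y by auto
    show "continuous_on (cball x r) (\<lambda>x. F (x, y))"
      using holomorphic_on_imp_continuous_on[OF holo2_holomorphic_fst[OF F]] sub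
      by (rule continuous_on_subset)
    show "(\<lambda>x. F (x, y)) holomorphic_on ball x r"
      using holo2_holomorphic_fst[OF F] by (rule holomorphic_on_subset) (use sub ball_subset_cball in blast)
    show "norm (F (t, y)) \<le> M" if "norm (x - t) = r" for t
      using M[of "(t, y)"] \<open>cball x r \<subseteq> cball a (2 * r)\<close> that y by (auto simp: dist_norm)
  qed (rule r)
  then show ?thesis by (rule that)
qed

lemma holo2_dz_local_estimates:
  assumes F: "holo2 U F" and ab: "(a, b) \<in> U"
  obtains r C where "r > 0" "cball a r \<times> cball b r \<subseteq> U"
    "\<And>x y. x \<in> cball a r \<Longrightarrow> y \<in> cball b r \<Longrightarrow>
       norm (dz F (x, y) - dz F (a, y)) \<le> C * norm (x - a)"
    "\<And>x y. x \<in> cball a r \<Longrightarrow> y \<in> cball b r \<Longrightarrow>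
       norm (F (x, y) - F (a, y) - (x - a) * dz F (a, y)) \<le> C * (norm (x - a))\<^sup>2"
proof -
  obtain s where "s > 0" and s: "cball a s \<times> cball b s \<subseteq> U"
    using cball_Times_subset_open[OF holo2_open[OF F] ab] .
  define r where "r = s / 2"
  have r: "r > 0" and box: "cball a (2 * r) \<times> cball b (2 * r) \<subseteq> U"
    using \<open>s > 0\<close> s by (simp_all add: r_def)
  have box_r: "cball a r \<times> cball b r \<subseteq> U"
    using box r by (auto simp: subset_iff)
  obtain C where C: "\<And>x y. x \<in> cball a r \<Longrightarrow> y \<in> cball b (2 * r) \<Longrightarrow>
      norm ((deriv ^^ 2) (\<lambda>x. F (x, y)) x) \<le> C"
    using holo2_second_dz_bounded[OF F r box] by blast
  have "norm (dz F (x, y) - dz F (a, y)) \<le> C * norm (x - a) \<and>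
        norm (F (x, y) - F (a, y) - (x - a) * dz F (a, y)) \<le> C * (norm (x - a))\<^sup>2"
    if x: "x \<in> cball a r" and y: "y \<in> cball b r" for x y
  proof -
    have y': "y \<in> cball b (2 * r)" using y r by auto
    have inU: "(t, y) \<in> U" if "t \<in> cball a r" for t using that box_r y by auto
    show ?thesis
      using bounded_second_derivative_estimates[OF holo2_has_dz[OF F inU] holo2_dz_has_derivative_fst[OF F inU] C[OF _ y'] x]
      by simp
  qed
  then show ?thesis using that r box_r by blast
qed

lemma holo2_dz_uniform_limit:
  assumes F: "holo2 U F" and ab: "(a, b) \<in> U"
  obtains r where "r > 0" "cball a r \<times> cball b r \<subseteq> U"
    "uniform_limit (cball b r) (\<lambda>h y. (F (a + h, y) - F (a, y)) / h) (\<lambda>y. dz F (a, y)) (at 0)"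
proof -
  obtain r C where r: "r > 0" and box: "cball a r \<times> cball b r \<subseteq> U"
    and "\<And>x y. x \<in> cball a r \<Longrightarrow> y \<in> cball b r \<Longrightarrow>
       norm (dz F (x, y) - dz F (a, y)) \<le> C * norm (x - a)"
    and taylor: "\<And>x y. x \<in> cball a r \<Longrightarrow> y \<in> cball b r \<Longrightarrow>
       norm (F (x, y) - F (a, y) - (x - a) * dz F (a, y)) \<le> C * (norm (x - a))\<^sup>2"
    using holo2_dz_local_estimates[OF F ab] by blast
  have "uniform_limit (cball b r) (\<lambda>h y. (F (a + h, y) - F (a, y)) / h) (\<lambda>y. dz F (a, y)) (at 0)"
  proof (rule uniform_limitI)
    fix \<epsilon> :: real assume "\<epsilon> > 0"
    have "((\<lambda>h. C * norm h) \<longlongrightarrow> 0) (at (0::complex))"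
      by (intro tendsto_mult_right_zero tendsto_norm_zero tendsto_ident_at)
    then have "\<forall>\<^sub>F h in at (0::complex). C * norm h < \<epsilon>"
      using \<open>\<epsilon> > 0\<close> by (rule order_tendstoD(2))
    moreover have "\<forall>\<^sub>F h in at (0::complex). h \<noteq> 0 \<and> norm h < r"
      unfolding eventually_at using r by (intro exI[of _ r]) auto
    ultimately show "\<forall>\<^sub>F h in at 0. \<forall>y\<in>cball b r. dist ((F (a + h, y) - F (a, y)) / h) (dz F (a, y)) < \<epsilon>"
    proof eventually_elim
      case (elim h)
      show ?case
      proof
        fix y assume y: "y \<in> cball b r"
        have "dist ((F (a + h, y) - F (a, y)) / h) (dz F (a, y))
            = norm (F (a + h, y) - F (a, y) - h * dz F (a, y)) / norm h"
          using elim by (simp add: dist_norm norm_divide [symmetric] diff_divide_distrib)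
        also have "\<dots> \<le> C * (norm h)\<^sup>2 / norm h"
          using taylor[of "a + h" y] elim y by (intro divide_right_mono) (auto simp: dist_norm)
        also have "\<dots> = C * norm h" using elim by (simp add: power2_eq_square)
        finally show "dist ((F (a + h, y) - F (a, y)) / h) (dz F (a, y)) < \<epsilon>"
          using elim by linarith
      qed
    qed
  qed
  then show ?thesis using that r box by blast
qed

(* The z-difference quotients are holomorphic in w and converge uniformly, so their limit is
   holomorphic in w, with derivative the limit of the w-derivatives of the quotients. *)
lemma holo2_dz_has_derivative_snd:
  assumes F: "holo2 U F" and ab: "(a, b) \<in> U"
  obtains d where "((\<lambda>y. dz F (a, y)) has_field_derivative d) (at b)"
    "((\<lambda>h. (dw F (a + h, b) - dw F (a, b)) / h) \<longlongrightarrow> d) (at 0)"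
proof -
  obtain r where r: "r > 0" and box: "cball a r \<times> cball b r \<subseteq> U"
    and lim: "uniform_limit (cball b r) (\<lambda>h y. (F (a + h, y) - F (a, y)) / h) (\<lambda>y. dz F (a, y)) (at 0)"
    by (rule holo2_dz_uniform_limit[OF F ab])
  have "\<forall>\<^sub>F h in at (0::complex). h \<noteq> 0 \<and> norm h < r"
    unfolding eventually_at using r by (intro exI[of _ r]) auto
  then have ev: "\<forall>\<^sub>F h in at 0. continuous_on (cball b r) (\<lambda>y. (F (a + h, y) - F (a, y)) / h) \<and>
      (\<forall>w\<in>ball b r. ((\<lambda>y. (F (a + h, y) - F (a, y)) / h)
         has_field_derivative (dw F (a + h, w) - dw F (a, w)) / h) (at w))"
  proof eventually_elim
    case (elim h)
    have "a + h \<in> cball a r" "a \<in> cball a r" using elim r by (simp_all add: dist_norm)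
    then have inU: "(a + h, w) \<in> U" "(a, w) \<in> U" if "w \<in> cball b r" for w
      using box that by blast+
    have D: "((\<lambda>y. (F (a + h, y) - F (a, y)) / h) has_field_derivative (dw F (a + h, w) - dw F (a, w)) / h) (at w)"
      if "w \<in> cball b r" for w
      by (intro DERIV_cdivide DERIV_diff holo2_has_dw[OF F inU(1)] holo2_has_dw[OF F inU(2)] that)
    have "continuous_on (cball b r) (\<lambda>y. (F (a + h, y) - F (a, y)) / h)"
      by (rule DERIV_continuous_on[OF has_field_derivative_at_within[OF D]])
    then show ?case using D by simp
  qed
  show ?thesis
  proof (rule has_complex_derivative_uniform_limit[OF ev lim trivial_limit_at r])
    fix g' assume "\<And>w. w \<in> ball b r \<Longrightarrow> ((\<lambda>y. dz F (a, y)) has_field_derivative g' w) (at w) \<and>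
      ((\<lambda>h. (dw F (a + h, w) - dw F (a, w)) / h) \<longlongrightarrow> g' w) (at 0)"
    from this[of b] show ?thesis using that r by auto
  qed
qed

lemma holo2_isCont_dz:
  assumes F: "holo2 U F" and ab: "(a, b) \<in> U"
  shows "isCont (dz F) (a, b)"
proof -
  obtain r C where r: "r > 0" and "cball a r \<times> cball b r \<subseteq> U"
    and lipschitz: "\<And>x y. x \<in> cball a r \<Longrightarrow> y \<in> cball b r \<Longrightarrow>
       norm (dz F (x, y) - dz F (a, y)) \<le> C * norm (x - a)"
    and "\<And>x y. x \<in> cball a r \<Longrightarrow> y \<in> cball b r \<Longrightarrow>
       norm (F (x, y) - F (a, y) - (x - a) * dz F (a, y)) \<le> C * (norm (x - a))\<^sup>2"
    using holo2_dz_local_estimates[OF F ab] by blast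
  have "((\<lambda>p. dz F p - dz F (a, snd p)) \<longlongrightarrow> 0) (at (a, b))"
  proof (rule Lim_null_comparison)
    have "\<forall>\<^sub>F p in at (a, b). p \<in> cball (a, b) r"
      using r eventually_at_ball'[of r "(a, b)" UNIV] by (auto elim: eventually_mono)
    then show "\<forall>\<^sub>F p in at (a, b). norm (dz F p - dz F (a, snd p)) \<le> C * norm (fst p - a)"
    proof eventually_elim
      case (elim p)
      then have "fst p \<in> cball a r" "snd p \<in> cball b r"
        using dist_fst_le[of "(a, b)" p] dist_snd_le[of "(a, b)" p] by auto
      then show ?case using lipschitz[of "fst p" "snd p"] by simp
    qed
    have "((\<lambda>p. fst p - a) \<longlongrightarrow> 0) (at (a, b))"
      using tendsto_diff[OF tendsto_fst[OF tendsto_ident_at[of "(a, b)" UNIV]] tendsto_const[of a]]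
      by simp
    then show "((\<lambda>p. C * norm (fst p - a)) \<longlongrightarrow> 0) (at (a, b))"
      by (intro tendsto_mult_right_zero tendsto_norm_zero)
  qed
  moreover have "((\<lambda>p. dz F (a, snd p)) \<longlongrightarrow> dz F (a, b)) (at (a, b))"
  proof -
    obtain d where "((\<lambda>y. dz F (a, y)) has_field_derivative d) (at b)"
      using holo2_dz_has_derivative_snd[OF F ab] by blast
    moreover have "(snd \<longlongrightarrow> b) (at (a, b))"
      using tendsto_snd[OF tendsto_ident_at[of "(a, b)" UNIV]] by simp
    ultimately show ?thesis by (rule isCont_tendsto_compose[OF DERIV_isCont])
  qed
  ultimately have "((\<lambda>p. (dz F p - dz F (a, snd p)) + dz F (a, snd p)) \<longlongrightarrow> 0 + dz F (a, b)) (at (a, b))"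
    by (rule tendsto_add)
  then show ?thesis by (simp add: isCont_def)
qed

lemma holo2_dz:
  assumes F: "holo2 U F" shows "holo2 U (dz F)"
  unfolding holo2_def
proof (intro conjI allI impI)
  show "open U" using F by (rule holo2_open)
  show "continuous_on U (dz F)"
    using holo2_isCont_dz[OF F] by (intro continuous_at_imp_continuous_on) auto
  fix a b assume ab: "(a, b) \<in> U"
  show "(\<lambda>x. dz F (x, b)) field_differentiable at a"
    using holo2_dz_has_derivative_fst[OF F ab] by (auto simp: field_differentiable_def)
  show "(\<lambda>y. dz F (a, y)) field_differentiable at b"
  proof -
    obtain d where "((\<lambda>y. dz F (a, y)) has_field_derivative d) (at b)"
      using holo2_dz_has_derivative_snd[OF F ab] by blast
    then show ?thesis by (auto simp: field_differentiable_def)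
  qed
qed

lemma holo2_comp_swap:
  assumes F: "holo2 U F" shows "holo2 (prod.swap -` U) (F \<circ> prod.swap)"
  unfolding holo2_def
proof (intro conjI allI impI)
  show "open (prod.swap -` U)"
    using holo2_open[OF F] continuous_on_swap by (rule open_vimage)
  show "continuous_on (prod.swap -` U) (F \<circ> prod.swap)"
    using F by (intro continuous_on_compose continuous_on_swap)
      (auto simp: holo2_def intro: continuous_on_subset)
  fix a b assume "(a, b) \<in> prod.swap -` U"
  then show "(\<lambda>x. (F \<circ> prod.swap) (x, b)) field_differentiable at a"
    and "(\<lambda>y. (F \<circ> prod.swap) (a, y)) field_differentiable at b"
    using F by (auto simp: holo2_def)
qed

lemma dz_comp_swap: "dz (F \<circ> prod.swap) = dw F \<circ> prod.swap"
  by (auto simp: fun_eq_iff dz_def dw_def)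

lemma holo2_dw:
  assumes F: "holo2 U F" shows "holo2 U (dw F)"
proof -
  have "holo2 (prod.swap -` prod.swap -` U) (dz (F \<circ> prod.swap) \<circ> prod.swap)"
    by (intro holo2_comp_swap holo2_dz F)
  moreover have "prod.swap -` prod.swap -` U = U" by auto
  ultimately show ?thesis by (simp add: dz_comp_swap comp_assoc)
qed

lemma holo2_dw_dz_commute:
  assumes F: "holo2 U F" and ab: "(a, b) \<in> U"
  shows "dw (dz F) (a, b) = dz (dw F) (a, b)"
proof -
  obtain d where d: "((\<lambda>y. dz F (a, y)) has_field_derivative d) (at b)"
     and quotient: "((\<lambda>h. (dw F (a + h, b) - dw F (a, b)) / h) \<longlongrightarrow> d) (at 0)"
    using holo2_dz_has_derivative_snd[OF F ab] by blast
  have "((\<lambda>h. (dw F (a + h, b) - dw F (a, b)) / h) \<longlongrightarrow> dz (dw F) (a, b)) (at 0)"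
    using holo2_has_dz[OF holo2_dw[OF F] ab] by (simp add: DERIV_def)
  with quotient have "d = dz (dw F) (a, b)" by (rule tendsto_unique[OF trivial_limit_at])
  moreover have "dw (dz F) (a, b) = d" using d by (simp add: dw_def DERIV_imp_deriv)
  ultimately show ?thesis by simp
qed

lemma holo2_has_derivative:
  assumes F: "holo2 U F" and ab: "(a, b) \<in> U"
  shows "(F has_derivative (\<lambda>(h, k). dz F (a, b) * h + dw F (a, b) * k)) (at (a, b))"
proof -
  obtain r where r: "r > 0" and box: "cball a r \<times> cball b r \<subseteq> U"
    using cball_Times_subset_open[OF holo2_open[OF F] ab] .
  have "((\<lambda>(x, y). F (x, y)) has_derivative
      (\<lambda>(h, k). dz F (a, b) * h + blinfun_apply (blinfun_mult_right (dw F (a, b))) k))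
      (at (a, b) within ball a r \<times> ball b r)"
  proof (rule has_derivative_partialsI)
    show "((\<lambda>x. F (x, b)) has_derivative (*) (dz F (a, b))) (at a within ball a r)"
      using holo2_has_dz[OF F ab] by (simp add: has_field_derivative_def has_derivative_at_withinI)
    fix x y assume "x \<in> ball a r" "y \<in> ball b r"
    then have "(x, y) \<in> U" using box by auto
    then show "((\<lambda>y. F (x, y)) has_derivative blinfun_apply (blinfun_mult_right (dw F (x, y))))
        (at y within ball b r)"
      using holo2_has_dw[OF F] by (simp add: has_field_derivative_def has_derivative_at_withinI)
  next
    have "isCont (dw F) (a, b)"
      using holo2_dw[OF F] ab holo2_open[OF F] by (simp add: holo2_def continuous_on_eq_continuous_at)
    then have "isCont (\<lambda>p. blinfun_mult_right (dw F p)) (a, b)"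
      by (rule bounded_linear.continuous[OF bounded_linear_blinfun_mult_right])
    then have "continuous (at (a, b) within ball a r \<times> ball b r) (\<lambda>p. blinfun_mult_right (dw F p))"
      by (rule continuous_at_imp_continuous_within)
    moreover have "(\<lambda>p. blinfun_mult_right (dw F p)) = (\<lambda>(x, y). blinfun_mult_right (dw F (x, y)))"
      by auto
    ultimately show "continuous (at (a, b) within ball a r \<times> ball b r)
        (\<lambda>(x, y). blinfun_mult_right (dw F (x, y)))"
      by simp
  qed (use r in auto)
  moreover have "at (a, b) within ball a r \<times> ball b r = at (a, b)"
    using r by (intro at_within_open) (auto simp: open_Times)
  moreover have "(\<lambda>(x, y). F (x, y)) = F" by auto
  moreover have "(\<lambda>(h, k). dz F (a, b) * h + blinfun_apply (blinfun_mult_right (dw F (a, b))) k)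
      = (\<lambda>(h, k). dz F (a, b) * h + dw F (a, b) * k)"
    by auto
  ultimately show ?thesis by simp
qed

section \<open>Derivatives along complex lines\<close>

definition line_deriv :: "complex \<Rightarrow> (complex \<times> complex \<Rightarrow> complex) \<Rightarrow> complex \<times> complex \<Rightarrow> complex" where
  "line_deriv c F = (\<lambda>p. dz F p + c * dw F p)"

lemma has_field_derivative_along_line:
  assumes F: "holo2 U F" and t: "(t, c * t) \<in> U"
  shows "((\<lambda>t. F (t, c * t)) has_field_derivative line_deriv c F (t, c * t)) (at t)"
proof -
  have "((\<lambda>t. (t, c * t)) has_derivative (\<lambda>h. (h, c * h))) (at t)"
    by (intro has_derivative_Pair has_derivative_ident has_derivative_mult_right)
  from diff_chain_at[OF this holo2_has_derivative[OF F t]]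
  have "((\<lambda>t. F (t, c * t)) has_derivative
      (\<lambda>h. dz F (t, c * t) * h + dw F (t, c * t) * (c * h))) (at t)"
    by (simp add: o_def)
  moreover have "(\<lambda>h. dz F (t, c * t) * h + dw F (t, c * t) * (c * h)) = (*) (line_deriv c F (t, c * t))"
    by (auto simp: fun_eq_iff line_deriv_def algebra_simps)
  ultimately show ?thesis by (simp only: has_field_derivative_def)
qed

lemma holo2_line_deriv_power: "holo2 U F \<Longrightarrow> holo2 U ((line_deriv c ^^ n) F)"
proof (induction n)
  case (Suc n)
  then show ?case
    unfolding funpow.simps o_def line_deriv_def by (intro holo2_add_cmult holo2_dz holo2_dw)
qed simp

lemma line_deriv_power_two:
  assumes F: "holo2 U F" and p: "p \<in> U"
  shows "(line_deriv c ^^ 2) F p = dz (dz F) p + 2 * c * dz (dw F) p + c\<^sup>2 * dw (dw F) p"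
proof -
  obtain a b where ab: "p = (a, b)" by fastforce
  have dz_lin: "dz (\<lambda>p. G p + c * H p) (a, b) = dz G (a, b) + c * dz H (a, b)"
    and dw_lin: "dw (\<lambda>p. G p + c * H p) (a, b) = dw G (a, b) + c * dw H (a, b)"
    if "holo2 U G" "holo2 U H" for G H
    using DERIV_imp_deriv[OF DERIV_add[OF holo2_has_dz[OF that(1)] DERIV_cmult[OF holo2_has_dz[OF that(2)]]]]
      DERIV_imp_deriv[OF DERIV_add[OF holo2_has_dw[OF that(1)] DERIV_cmult[OF holo2_has_dw[OF that(2)]]]]
      p ab by (simp_all add: dz_def dw_def)
  have "(line_deriv c ^^ 2) F p = line_deriv c (line_deriv c F) (a, b)"
    by (simp add: ab numeral_2_eq_2)
  also have "\<dots> = dz (dz F) p + c * dz (dw F) p + c * (dw (dz F) p + c * dw (dw F) p)"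
    using dz_lin[OF holo2_dz[OF F] holo2_dw[OF F]] dw_lin[OF holo2_dz[OF F] holo2_dw[OF F]] ab
    by (simp add: line_deriv_def)
  also have "\<dots> = dz (dz F) p + 2 * c * dz (dw F) p + c\<^sup>2 * dw (dw F) p"
    using holo2_dw_dz_commute[OF F] p ab by (simp add: algebra_simps power2_eq_square)
  finally show ?thesis .
qed

lemma open_line_preimage:
  fixes c :: "'a::real_normed_algebra"
  assumes "open U" shows "open {t. (t, c * t) \<in> U}"
proof -
  have "continuous_on UNIV (\<lambda>t. (t, c * t))" by (intro continuous_intros)
  from open_vimage[OF assms this] show ?thesis by (simp add: vimage_def)
qed

lemma holomorphic_on_line:
  assumes "holo2 U F" shows "(\<lambda>t. F (t, c * t)) holomorphic_on {t. (t, c * t) \<in> U}"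
  using open_line_preimage[OF holo2_open[OF assms]] has_field_derivative_along_line[OF assms]
  by (auto simp: holomorphic_on_open)

lemma higher_deriv_along_line:
  assumes F: "holo2 U F"
  shows "(t, c * t) \<in> U \<Longrightarrow> (deriv ^^ n) (\<lambda>t. F (t, c * t)) t = (line_deriv c ^^ n) F (t, c * t)"
proof (induction n arbitrary: t)
  case (Suc n)
  have "\<forall>\<^sub>F s in nhds t. (s, c * s) \<in> U"
    using eventually_nhds_in_open[OF open_line_preimage[OF holo2_open[OF F]], of t c] Suc.prems
    by simp
  then have "\<forall>\<^sub>F s in nhds t. (deriv ^^ n) (\<lambda>t. F (t, c * t)) s = (line_deriv c ^^ n) F (s, c * s)"
    by (rule eventually_mono) (simp add: Suc.IH)
  then have "(deriv ^^ Suc n) (\<lambda>t. F (t, c * t)) t = deriv (\<lambda>s. (line_deriv c ^^ n) F (s, c * s)) t"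
    using deriv_cong_ev[OF _ refl] by simp
  also have "\<dots> = (line_deriv c ^^ Suc n) F (t, c * t)"
    using has_field_derivative_along_line[OF holo2_line_deriv_power[OF F] Suc.prems]
    by (simp add: DERIV_imp_deriv)
  finally show ?case .
qed simp

lemma holo2_proportional_on_line:
  assumes F: "holo2 U F" and G: "holo2 U G" and ball: "ball (0, 0) R \<subseteq> U"
    and coeffs: "\<And>n. \<alpha> * (line_deriv c ^^ n) F (0, 0) = \<beta> * (line_deriv c ^^ n) G (0, 0)"
    and t: "(t, c * t) \<in> ball (0, 0) R"
  shows "\<alpha> * F (t, c * t) = \<beta> * G (t, c * t)"
proof -
  define S where "S = {t. (t, c * t) \<in> ball (0, 0) R}"
  have "open S" unfolding S_def by (rule open_line_preimage[OF open_ball])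
  have "linear (\<lambda>t. (t, c * t))"
    by (intro bounded_linear.linear bounded_linear_Pair bounded_linear_ident bounded_linear_mult_right)
  then have "convex S"
    unfolding S_def using convex_linear_vimage[OF _ convex_ball] by (simp add: vimage_def)
  have "0 \<in> S" using t unfolding S_def by (auto intro: le_less_trans[OF zero_le_dist])
  have "S \<subseteq> {t. (t, c * t) \<in> U}" using ball by (auto simp: S_def)
  then have hF: "(\<lambda>t. F (t, c * t)) holomorphic_on S" and hG: "(\<lambda>t. G (t, c * t)) holomorphic_on S"
    using holomorphic_on_line[OF F] holomorphic_on_line[OF G] by (auto intro: holomorphic_on_subset)
  have holo: "(\<lambda>t. \<alpha> * F (t, c * t) - \<beta> * G (t, c * t)) holomorphic_on S"
    using hF hG by (intro holomorphic_intros)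
  have "(deriv ^^ n) (\<lambda>t. \<alpha> * F (t, c * t) - \<beta> * G (t, c * t)) 0 = 0" for n
  proof -
    have "(deriv ^^ n) (\<lambda>t. \<alpha> * F (t, c * t) - \<beta> * G (t, c * t)) 0
        = (deriv ^^ n) (\<lambda>t. \<alpha> * F (t, c * t)) 0 - (deriv ^^ n) (\<lambda>t. \<beta> * G (t, c * t)) 0"
      using hF hG \<open>open S\<close> \<open>0 \<in> S\<close> by (intro higher_deriv_diff holomorphic_intros)
    also have "\<dots> = \<alpha> * (deriv ^^ n) (\<lambda>t. F (t, c * t)) 0 - \<beta> * (deriv ^^ n) (\<lambda>t. G (t, c * t)) 0"
      using higher_deriv_cmult[OF hF \<open>0 \<in> S\<close> \<open>open S\<close>] higher_deriv_cmult[OF hG \<open>0 \<in> S\<close> \<open>open S\<close>]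
      by simp
    also have "\<dots> = 0"
      using coeffs[of n] \<open>0 \<in> S\<close> \<open>S \<subseteq> _\<close>
      by (auto simp: higher_deriv_along_line[OF F] higher_deriv_along_line[OF G])
    finally show ?thesis .
  qed
  moreover have "t \<in> S" using t by (simp add: S_def)
  ultimately have "(\<lambda>t. \<alpha> * F (t, c * t) - \<beta> * G (t, c * t)) t = 0"
    by (intro holomorphic_fun_eq_0_on_connected[OF holo \<open>open S\<close> convex_connected[OF \<open>convex S\<close>] _ \<open>0 \<in> S\<close>])
  then show ?thesis by simp
qed

section \<open>Tangential degeneracy at the origin\<close>

lemma dz_fbar:
  assumes F: "holo2 U F" and ct: "(cnj c, cnj t) \<in> U"
  shows "dz (fbar F) (c, t) = cnj (dz F (cnj c, cnj t))"
proof -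
  have "((cnj \<circ> (\<lambda>x. F (x, cnj t)) \<circ> cnj) has_field_derivative cnj (dz F (cnj c, cnj t))) (at c)"
    using holo2_has_dz[OF F ct] by (intro has_field_derivative_cnj_cnj) simp
  then show ?thesis by (simp add: dz_def fbar_def o_def DERIV_imp_deriv)
qed

lemma dw_fbar:
  assumes F: "holo2 U F" and ct: "(cnj c, cnj t) \<in> U"
  shows "dw (fbar F) (c, t) = cnj (dw F (cnj c, cnj t))"
proof -
  have "((cnj \<circ> (\<lambda>y. F (cnj c, y)) \<circ> cnj) has_field_derivative cnj (dw F (cnj c, cnj t))) (at t)"
    using holo2_has_dw[OF F ct] by (intro has_field_derivative_cnj_cnj) simp
  then show ?thesis by (simp add: dw_def fbar_def o_def DERIV_imp_deriv)
qed

lemma Lop_power_fbar: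
  assumes F: "holo2 U F" and p: "(cnj (fst p), cnj (snd p)) \<in> U"
  shows "(Lop z ^^ k) (fbar F) p = fbar ((line_deriv (2 * \<i> * cnj z) ^^ k) F) p"
  using p
proof (induction k arbitrary: p)
  case (Suc k)
  define V where "V = {p. (cnj (fst p), cnj (snd p)) \<in> U}"
  have "open V"
    using open_vimage[OF holo2_open[OF F], of "\<lambda>p. (cnj (fst p), cnj (snd p))"]
    by (simp add: V_def vimage_def continuous_intros)
  have "p \<in> V" using Suc.prems by (simp add: V_def)
  have "(Lop z ^^ k) (fbar F) q = fbar ((line_deriv (2 * \<i> * cnj z) ^^ k) F) q" if "q \<in> V" for q
    using Suc.IH that by (simp add: V_def)
  note cong = dz_dw_cong_open[OF \<open>open V\<close> \<open>p \<in> V\<close> this]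
  obtain c t where ct: "p = (c, t)" by fastforce
  have "(Lop z ^^ Suc k) (fbar F) p = Lop z (fbar ((line_deriv (2 * \<i> * cnj z) ^^ k) F)) p"
    using cong by (simp add: Lop_def)
  also have "\<dots> = fbar ((line_deriv (2 * \<i> * cnj z) ^^ Suc k) F) p"
    using dz_fbar[OF holo2_line_deriv_power[OF F]] dw_fbar[OF holo2_line_deriv_power[OF F]] Suc.prems ct
    by (simp add: Lop_def line_deriv_def fbar_def)
  finally show ?case .
qed simp

lemma Lvec_origin:
  assumes "holo2 U (f j)" "(0, 0) \<in> U" "j \<in> {1..N-1}"
  shows "Lvec N f k p (0, 0) j = cnj ((line_deriv (2 * \<i> * cnj (fst p)) ^^ k) (f j) (0, 0))"
  using assms Lop_power_fbar[OF assms(1), of "(0, 0)"] by (simp add: Lvec_def fbar_def)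

lemma Lvec_in_span_of_first_three:
  assumes "Etl N f 2 p qb = Et N f p qb"
  obtains a0 a1 a2 where
    "\<And>j. Lvec N f k p qb j = a0 * Lvec N f 0 p qb j + a1 * Lvec N f 1 p qb j + a2 * Lvec N f 2 p qb j"
proof -
  interpret module cscale by unfold_locales (auto simp: cscale_def fun_eq_iff algebra_simps)
  have "{Lvec N f k' p qb | k'. k' \<le> 2} = {Lvec N f 0 p qb, Lvec N f 1 p qb, Lvec N f 2 p qb}"
    by (auto simp: le_Suc_eq numeral_2_eq_2)
  moreover have "Lvec N f k p qb \<in> Et N f p qb"
    unfolding Et_def by (rule span_base) blast
  ultimately have "Lvec N f k p qb \<in> span {Lvec N f 0 p qb, Lvec N f 1 p qb, Lvec N f 2 p qb}"
    using assms by (simp add: Etl_def)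
  then obtain a0 a1 a2 where
    "Lvec N f k p qb - cscale a0 (Lvec N f 0 p qb) - cscale a1 (Lvec N f 1 p qb)
       - cscale a2 (Lvec N f 2 p qb) \<in> {0}"
    by (auto simp: span_insert)
  then show ?thesis by (intro that[of a0 a1 a2]) (auto simp: fun_eq_iff cscale_def algebra_simps)
qed

lemma line_derivs_proportional:
  assumes f: "\<forall>j\<in>{1..N-1}. holo2 U (f j)" and U0: "(0, 0) \<in> U"
    and generic: "Etl N f 2 (z, w) (0, 0) = Et N f (z, w) (0, 0)" and c: "c = 2 * \<i> * cnj z"
    and ij: "i \<in> {1..N-1}" "j \<in> {1..N-1}"
    and vanish: "\<And>l. l \<in> {i, j} \<Longrightarrow> f l (0, 0) = 0 \<and> line_deriv c (f l) (0, 0) = 0"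
  shows "(line_deriv c ^^ n) (f i) (0, 0) * (line_deriv c ^^ 2) (f j) (0, 0)
       = (line_deriv c ^^ n) (f j) (0, 0) * (line_deriv c ^^ 2) (f i) (0, 0)"
proof -
  obtain a0 a1 a2 where span: "\<And>l. Lvec N f n (z, w) (0, 0) l = a0 * Lvec N f 0 (z, w) (0, 0) l
      + a1 * Lvec N f 1 (z, w) (0, 0) l + a2 * Lvec N f 2 (z, w) (0, 0) l"
    using Lvec_in_span_of_first_three[OF generic] by blast
  have "cnj ((line_deriv c ^^ n) (f l) (0, 0)) = a2 * cnj ((line_deriv c ^^ 2) (f l) (0, 0))"
    if "l \<in> {i, j}" for l
  proof -
    \<comment> \<open>the terms with a0 and a1 vanish in the components i and j\<close>
    have l: "l \<in> {1..N-1}" using that ij by auto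
    have "Lvec N f m (z, w) (0, 0) l = cnj ((line_deriv c ^^ m) (f l) (0, 0))" for m
      using Lvec_origin[OF _ U0 l] f l c by simp
    then show ?thesis using span[of l] vanish[OF that] by simp
  qed
  from this[of i] this[of j]
  have "cnj ((line_deriv c ^^ n) (f i) (0, 0) * (line_deriv c ^^ 2) (f j) (0, 0))
      = cnj ((line_deriv c ^^ n) (f j) (0, 0) * (line_deriv c ^^ 2) (f i) (0, 0))"
    by (simp add: mult_ac)
  then show ?thesis by (simp only: complex_cnj_cancel_iff)
qed

lemma proportional_on_generic_line:
  assumes f: "\<forall>j\<in>{1..N-1}. holo2 U (f j)" and U0: "(0, 0) \<in> U" and ball: "ball (0, 0) R \<subseteq> U"
    and generic: "Etl N f 2 (z, w) (0, 0) = Et N f (z, w) (0, 0)" and c: "c = 2 * \<i> * cnj z"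
    and ij: "i \<in> {1..N-1}" "j \<in> {1..N-1}"
    and vanish: "\<And>l. l \<in> {i, j} \<Longrightarrow> f l (0, 0) = 0 \<and> line_deriv c (f l) (0, 0) = 0"
    and t: "(t, c * t) \<in> ball (0, 0) R"
  shows "(line_deriv c ^^ 2) (f j) (0, 0) * f i (t, c * t) = (line_deriv c ^^ 2) (f i) (0, 0) * f j (t, c * t)"
proof -
  have fi: "holo2 U (f i)" and fj: "holo2 U (f j)" using f ij by auto
  have "(line_deriv c ^^ 2) (f j) (0, 0) * (line_deriv c ^^ n) (f i) (0, 0)
      = (line_deriv c ^^ 2) (f i) (0, 0) * (line_deriv c ^^ n) (f j) (0, 0)" for n
    using line_derivs_proportional[OF f U0 generic c ij vanish, of n] by (simp add: mult.commute)
  then show ?thesis by (rule holo2_proportional_on_line[OF fi fj ball _ t])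
qed

section \<open>Functions vanishing on a dense set of lines\<close>

lemma closure_image_surj_UNIV:
  assumes "continuous_on UNIV f" "surj f" "closure A = UNIV"
  shows "closure (f ` A) = UNIV"
proof -
  have "f ` closure A \<subseteq> closure (f ` A)"
    using continuous_on_subset[OF assms(1) subset_UNIV] closed_closure closure_subset
    by (rule image_closure_subset)
  then show ?thesis using assms(2,3) by auto
qed

lemma continuous_on_vanishes_on_dense:
  fixes f :: "'a::topological_space \<Rightarrow> 'b::{t1_space, zero}"
  assumes cont: "continuous_on S f" and "open S" and dense: "closure D = UNIV"
    and vanish: "\<And>x. x \<in> S \<inter> D \<Longrightarrow> f x = 0" and x: "x \<in> S"
  shows "f x = 0"
proof (rule ccontr)
  assume "f x \<noteq> 0"
  have "open (S \<inter> f -` (- {0}))"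
    using cont \<open>open S\<close> by (intro continuous_open_preimage) auto
  moreover have "S \<inter> f -` (- {0}) \<inter> closure D \<noteq> {}"
    using x \<open>f x \<noteq> 0\<close> dense by auto
  ultimately have "S \<inter> f -` (- {0}) \<inter> D \<noteq> {}"
    by (simp add: open_Int_closure_eq_empty)
  then show False using vanish by auto
qed

lemma vanishes_on_dense_lines:
  fixes \<Phi> :: "complex \<times> complex \<Rightarrow> complex"
  assumes cont: "continuous_on V \<Phi>" and "open V" and dense: "closure B = UNIV"
    and lines: "\<And>c t. c \<in> B \<Longrightarrow> (t, c * t) \<in> V \<Longrightarrow> \<Phi> (t, c * t) = 0"
    and p: "p \<in> V"
  shows "\<Phi> p = 0"
proof (rule continuous_on_vanishes_on_dense[OF cont \<open>open V\<close> _ _ p])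
  have nonvertical: "{q. fst q \<noteq> 0} = (- {0}) \<times> (UNIV :: complex set)" by auto
  show "closure {q :: complex \<times> complex. fst q \<noteq> 0} = UNIV"
    unfolding nonvertical by (simp add: closure_Times closure_complement)
  fix q assume "q \<in> V \<inter> {q. fst q \<noteq> 0}"
  then obtain z w where q: "q = (z, w)" "z \<noteq> 0" "(z, w) \<in> V" by (cases q) auto
  define S where "S = {c. (z, c * z) \<in> V}"
  have slope: "continuous_on UNIV (\<lambda>c. (z, c * z))" by (intro continuous_intros)
  have "continuous_on S (\<lambda>c. \<Phi> (z, c * z))"
    by (rule continuous_on_compose2[OF cont continuous_on_subset[OF slope]]) (auto simp: S_def)
  moreover have "open S" using open_vimage[OF \<open>open V\<close> slope] by (simp add: S_def vimage_def)
  ultimately have "\<Phi> (z, (w / z) * z) = 0"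
    using continuous_on_vanishes_on_dense[of S "\<lambda>c. \<Phi> (z, c * z)" B "w / z"] dense lines q
    by (auto simp: S_def)
  then show "\<Phi> q = 0" using q by simp
qed

theorem lemma4p1:
  fixes N :: nat and f :: "nat \<Rightarrow> complex \<times> complex \<Rightarrow> complex"
    and g :: "complex \<times> complex \<Rightarrow> complex" and U :: "(complex \<times> complex) set"
  assumes N4: "N \<ge> 4"
    and U0: "(0, 0) \<in> U"
    and holo_f: "\<forall>j\<in>{1..N-1}. holo2 U (f j)"
    and holo_g: "holo2 U g"
    and maps: "\<forall>p\<in>U \<inter> Heis3. inHeis N (\<lambda>j. f j p) (g p)"
    and H0: "(\<forall>j\<in>{1..N-1}. f j (0, 0) = 0) \<and> g (0, 0) = 0"
    and tdeg: "tang_degenerate N f (0, 0) 2 (N - 3)"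
    and n10: "(\<forall>j\<in>{1..N-1}. pd 1 0 (f j) = (if j = 1 then 1 else 0)) \<and> pd 1 0 g = 0"
    and n01: "(\<forall>j\<in>{1..N-1}. pd 0 1 (f j) = 0) \<and> pd 0 1 g = 1"
    and n20: "(\<forall>j\<in>{1..N-1}. pd 2 0 (f j) = (if j = 2 then 2 else 0)) \<and> pd 2 0 g = 0"
    and n11: "pd 1 1 (f 2) = 0"
    and n02g: "Re (pd 0 2 g) = 0"
    and n21: "Re (pd 2 1 (f 2)) = 0"
    and n02f1: "Im (pd 0 2 (f 1)) = 0 \<and> Re (pd 0 2 (f 1)) \<ge> 0"
  shows "\<forall>k. 3 \<le> k \<and> k \<le> N - 1 \<longrightarrow>
           (\<forall>\<^sub>F p in nhds (0, 0).
              (2 * (fst p)\<^sup>2 + (snd p)\<^sup>2 * pd 0 2 (f 2)) * f k p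
              = snd p * (2 * fst p * pd 1 1 (f k) + snd p * pd 0 2 (f k)) * f 2 p)"
proof (intro allI impI)
  fix k :: nat assume k: "3 \<le> k \<and> k \<le> N - 1"
  have idx: "2 \<in> {1..N-1}" "k \<in> {1..N-1}" using N4 k by auto
  then have f2: "holo2 U (f 2)" and fk: "holo2 U (f k)" using holo_f by auto
  obtain R where "R > 0" and R: "ball (0, 0) R \<subseteq> U"
    using holo2_open[OF holo_g] U0 open_contains_ball by blast
  obtain A where "closure A = UNIV"
    and generic: "\<And>z. z \<in> A \<Longrightarrow> Etl N f 2 (z, 0) (0, 0) = Et N f (z, 0) (0, 0)"
    using tdeg by (auto simp: tang_degenerate_def generic_on_Sq_def qbar_def)
  define \<Phi> where "\<Phi> = (\<lambda>p. (2 * (fst p)\<^sup>2 + (snd p)\<^sup>2 * pd 0 2 (f 2)) * f k p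
      - snd p * (2 * fst p * pd 1 1 (f k) + snd p * pd 0 2 (f k)) * f 2 p)"
  have "\<Phi> (t, c * t) = 0"
    if slope: "c \<in> (\<lambda>z. 2 * \<i> * cnj z) ` A" and t: "(t, c * t) \<in> ball (0, 0) R" for c t
  proof -
    obtain z where "z \<in> A" and c: "c = 2 * \<i> * cnj z" using slope by blast
    have "f l (0, 0) = 0 \<and> line_deriv c (f l) (0, 0) = 0" if "l \<in> {2, k}" for l
      using that idx k H0 n10 n01 by (auto simp: line_deriv_def pd_def)
    from proportional_on_generic_line[OF holo_f U0 R generic[OF \<open>z \<in> A\<close>] c idx this t]
    have "(line_deriv c ^^ 2) (f k) (0, 0) * f 2 (t, c * t) = (line_deriv c ^^ 2) (f 2) (0, 0) * f k (t, c * t)" .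
    moreover have "(line_deriv c ^^ 2) (f 2) (0, 0) = 2 + c\<^sup>2 * pd 0 2 (f 2)"
      and "(line_deriv c ^^ 2) (f k) (0, 0) = 2 * c * pd 1 1 (f k) + c\<^sup>2 * pd 0 2 (f k)"
      using line_deriv_power_two[OF f2 U0] line_deriv_power_two[OF fk U0] n20 n11 idx k
      by (simp_all add: pd_def numeral_2_eq_2)
    ultimately have "(2 + c\<^sup>2 * pd 0 2 (f 2)) * f k (t, c * t)
        = (2 * c * pd 1 1 (f k) + c\<^sup>2 * pd 0 2 (f k)) * f 2 (t, c * t)"
      by simp
    moreover have "\<Phi> (t, c * t) = t\<^sup>2 * ((2 + c\<^sup>2 * pd 0 2 (f 2)) * f k (t, c * t)
        - (2 * c * pd 1 1 (f k) + c\<^sup>2 * pd 0 2 (f k)) * f 2 (t, c * t))"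
      by (simp add: \<Phi>_def power2_eq_square algebra_simps)
    ultimately show ?thesis by simp
  qed
  moreover have "closure ((\<lambda>z. 2 * \<i> * cnj z) ` A) = UNIV"
  proof (rule closure_image_surj_UNIV[OF _ _ \<open>closure A = UNIV\<close>])
    show "surj (\<lambda>z. 2 * \<i> * cnj z)" by (rule surjI[of _ "\<lambda>c. cnj (c / (2 * \<i>))"]) simp
  qed (intro continuous_intros)
  moreover have "continuous_on (ball (0, 0) R) \<Phi>"
    using f2 fk R unfolding \<Phi>_def holo2_def by (auto intro!: continuous_intros intro: continuous_on_subset)
  ultimately have vanish: "\<Phi> p = 0" if "p \<in> ball (0, 0) R" for p
    using vanishes_on_dense_lines[OF _ open_ball] that by blast
  have "\<forall>\<^sub>F p in nhds (0, 0). p \<in> ball (0, 0) R"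
    using \<open>R > 0\<close> by (intro eventually_nhds_in_open) auto
  then have "\<forall>\<^sub>F p in nhds (0, 0). \<Phi> p = 0"
    by (rule eventually_mono) (rule vanish)
  then show "\<forall>\<^sub>F p in nhds (0, 0).
      (2 * (fst p)\<^sup>2 + (snd p)\<^sup>2 * pd 0 2 (f 2)) * f k p
      = snd p * (2 * fst p * pd 1 1 (f k) + snd p * pd 0 2 (f k)) * f 2 p"
    by (rule eventually_mono) (simp add: \<Phi>_def)
qed

end
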